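(* Let $f(t)=1+\sum_{i=1}^{d}\binom{x_i}{i}t^{i}$ be a polynomial with positive integer coefficients, where $x_i\ge i-1$ are real numbers, and suppose all roots of $f(t)$ are real. If $x_{i-1}\ge\lceil x_i\rceil$ for all $2\le i\le d$, then $f(t)$ is the $f$-polynomial of a simplicial complex.
   Context: For real $x$ and integer $k\ge0$, $\binom{x}{k}=\frac{x(x-1)\cdots(x-k+1)}{k!}$; for $k\ge1$ and real $y>0$ there is a unique real $x\ge k-1$ with $\binom{x}{k}=y$. A simplicial complex $\Delta$ on a finite ground set is a family of subsets closed under taking subsets; $f_i$ is the number of faces of cardinality $i+1$ ($f_{-1}=1$ counts the empty face), and the $f$-polynomial of a $(d-1)$-dimensional $\Delta$ is $\sum_{i=0}^{d}f_{i-1}t^{i}$. A polynomial is called an $f$-polynomial of a simplicial complex if it equals the $f$-polynomial of some simplicial complex. *)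

theory Defs
  imports "HOL-Analysis.Analysis" "HOL-Computational_Algebra.Polynomial"
begin

definition simplicial_complex :: "'a set \<Rightarrow> 'a set set \<Rightarrow> bool" where
  "simplicial_complex V \<Delta> \<longleftrightarrow> finite V \<and> \<Delta> \<subseteq> Pow V \<and> \<Delta> \<noteq> {} \<and>
     (\<forall>F\<in>\<Delta>. \<forall>G. G \<subseteq> F \<longrightarrow> G \<in> \<Delta>)"

text \<open>Number of faces of cardinality i (this is f_{i-1}).\<close>
definition num_faces :: "'a set set \<Rightarrow> nat \<Rightarrow> nat" where
  "num_faces \<Delta> i = card {F \<in> \<Delta>. card F = i}"

definition f_polynomial :: "'a set \<Rightarrow> 'a set set \<Rightarrow> real poly" where
  "f_polynomial V \<Delta> = (\<Sum>i\<le>card V. monom (real (num_faces \<Delta> i)) i)"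

definition is_f_polynomial :: "real poly \<Rightarrow> bool" where
  "is_f_polynomial p \<longleftrightarrow> (\<exists>(V::nat set) \<Delta>. simplicial_complex V \<Delta> \<and> f_polynomial V \<Delta> = p)"

end

theory Submission imports Defs begin

(*
  Put m_i = \<lceil>x_i\<rceil>. The hypothesis x_{i-1} \<ge> \<lceil>x_i\<rceil> gives m_{i+1} \<le> x_i \<le> m_i, so m is
  nonincreasing and C(m_{i+1}, i) \<le> C(x_i, i) \<le> C(m_i, i). Hence one can choose as i-faces
  C(x_i, i) many i-subsets of {0..<m_i} containing all i-subsets of {0..<m_{i+1}}. This family
  is closed under subsets: a j-subset (j < i) of an i-face lies in {0..<m_i} \<subseteq> {0..<m_{j+1}},
  so it is one of the prescribed j-faces. Only integrality of the coefficients is used.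
*)

definition subsets_of_card :: "nat \<Rightarrow> nat \<Rightarrow> nat set set" where
  "subsets_of_card n k = {T. T \<subseteq> {0..<n} \<and> card T = k}"

lemma card_subsets_of_card: "card (subsets_of_card n k) = n choose k"
  unfolding subsets_of_card_def using n_subsets[of "{0..<n}" k] by simp

lemma finite_subsets_of_card: "finite (subsets_of_card n k)"
  unfolding subsets_of_card_def by (rule finite_subset[of _ "Pow {0..<n}"]) auto

lemma subsets_of_card_mono: "n \<le> n' \<Longrightarrow> subsets_of_card n k \<subseteq> subsets_of_card n' k"
  unfolding subsets_of_card_def by auto

lemma card_subset_between:
  assumes "finite B" "A \<subseteq> B" "card A \<le> n" "n \<le> card B"
  obtains S where "A \<subseteq> S" "S \<subseteq> B" "card S = n"
proof -
  have "finite A" using assms finite_subset by blast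
  then have "n - card A \<le> card (B - A)" using assms by (simp add: card_Diff_subset)
  then obtain C where C: "C \<subseteq> B - A" "card C = n - card A" "finite C"
    by (rule obtain_subset_with_card_n)
  have "card (A \<union> C) = n"
    using C \<open>finite A\<close> assms(3) by (subst card_Un_disjoint) auto
  moreover have "A \<union> C \<subseteq> B" using C(1) assms(2) by blast
  ultimately show thesis using that[of "A \<union> C"] by blast
qed

lemma lift_Suc_antimono_le_interval:
  fixes f :: "nat \<Rightarrow> 'a::preorder"
  assumes antitone_step: "\<And>n. a \<le> n \<Longrightarrow> Suc n \<le> b \<Longrightarrow> f (Suc n) \<le> f n"
    and "a \<le> j" "j \<le> i" "i \<le> b"
  shows "f i \<le> f j"
  using assms(3,4)
proof (induction i rule: dec_induct)
  case base
  show ?case by (rule order.refl)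
next
  case (step n)
  have "f (Suc n) \<le> f n" using \<open>a \<le> j\<close> step.hyps(1) step.prems by (intro antitone_step) auto
  also have "f n \<le> f j" using step.prems by (intro step.IH) auto
  finally show ?case .
qed

lemma f_polynomial_eq_sum_atMost:
  assumes "simplicial_complex V \<Delta>" "card V \<le> n"
  shows "f_polynomial V \<Delta> = (\<Sum>i\<le>n. monom (real (num_faces \<Delta> i)) i)"
proof -
  have "finite V" "\<Delta> \<subseteq> Pow V"
    using assms(1) unfolding simplicial_complex_def by auto
  then have "card F \<le> card V" if "F \<in> \<Delta>" for F
    using that by (intro card_mono) auto
  then have "{F \<in> \<Delta>. card F = i} = {}" if "card V < i" for i
    using that by force
  then have "num_faces \<Delta> i = 0" if "card V < i" for i
    unfolding num_faces_def using that by (metis card.empty)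
  then show ?thesis
    unfolding f_polynomial_def using assms(2)
    by (intro sum.mono_neutral_left) auto
qed

lemma num_faces_of_levels:
  assumes "\<And>i. 1 \<le> i \<Longrightarrow> i \<le> d \<Longrightarrow> F i \<subseteq> subsets_of_card (m i) i"
  shows "num_faces (insert {} (\<Union>i\<in>{1..d}. F i)) k =
    (if k = 0 then 1 else if k \<le> d then card (F k) else 0)"
proof -
  have card_level: "card T = i" if "1 \<le> i" "i \<le> d" "T \<in> F i" for i T
    using assms that by (auto simp: subsets_of_card_def)
  have "{T \<in> insert {} (\<Union>i\<in>{1..d}. F i). card T = k} =
      (if k = 0 then {{}} else if k \<le> d then F k else {})"
    using card_level by auto
  then show ?thesis by (simp add: num_faces_def)
qed

lemma simplicial_complex_of_levels:
  assumes antitone: "\<And>i j. 1 \<le> j \<Longrightarrow> j \<le> i \<Longrightarrow> i \<le> d \<Longrightarrow> m i \<le> m j"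
    and level_upper: "\<And>i. 1 \<le> i \<Longrightarrow> i \<le> d \<Longrightarrow> F i \<subseteq> subsets_of_card (m i) i"
    and level_lower: "\<And>i. 1 \<le> i \<Longrightarrow> i < d \<Longrightarrow> subsets_of_card (m (Suc i)) i \<subseteq> F i"
  shows "simplicial_complex {0..<m 1} (insert {} (\<Union>i\<in>{1..d}. F i))"
  unfolding simplicial_complex_def
proof (intro conjI ballI allI impI)
  have "F i \<subseteq> subsets_of_card (m 1) i" if "1 \<le> i" "i \<le> d" for i
    using level_upper[OF that] subsets_of_card_mono[OF antitone[of 1 i]] that by auto
  then have "(\<Union>i\<in>{1..d}. F i) \<subseteq> Pow {0..<m 1}"
    by (intro UN_least) (auto simp: subsets_of_card_def)
  then show "insert {} (\<Union>i\<in>{1..d}. F i) \<subseteq> Pow {0..<m 1}"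
    by simp
next
  fix T G assume T: "T \<in> insert {} (\<Union>i\<in>{1..d}. F i)" and "G \<subseteq> T"
  show "G \<in> insert {} (\<Union>i\<in>{1..d}. F i)"
  proof (cases "G = {} \<or> G = T")
    case False
    then have "T \<noteq> {}" using \<open>G \<subseteq> T\<close> by blast
    then obtain i where i: "1 \<le> i" "i \<le> d" "T \<in> F i" using T by auto
    then have T_sub: "T \<subseteq> {0..<m i}" and T_card: "card T = i"
      using level_upper by (auto simp: subsets_of_card_def)
    have "finite T" using T_sub finite_subset by blast
    define j where "j = card G"
    have "G \<subset> T" using False \<open>G \<subseteq> T\<close> by blast
    then have "j < i" unfolding j_def T_card[symmetric] using \<open>finite T\<close> by (simp add: psubset_card_mono)
    have "1 \<le> j"
      using False \<open>G \<subseteq> T\<close> \<open>finite T\<close> unfolding j_def by (simp add: Suc_le_eq card_gt_0_iff finite_subset)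
    have "m i \<le> m (Suc j)" using antitone[of "Suc j" i] \<open>j < i\<close> i by simp
    then have "G \<in> subsets_of_card (m (Suc j)) j"
      using \<open>G \<subseteq> T\<close> T_sub unfolding subsets_of_card_def j_def by auto
    then have "G \<in> F j"
      using level_lower[of j] \<open>1 \<le> j\<close> \<open>j < i\<close> i by auto
    then show ?thesis using \<open>1 \<le> j\<close> \<open>j < i\<close> i by auto
  qed (use T in auto)
qed auto

lemma obtain_face_levels:
  assumes antitone: "\<And>i j. 1 \<le> j \<Longrightarrow> j \<le> i \<Longrightarrow> i \<le> d \<Longrightarrow> m i \<le> m j"
    and lower: "\<And>i. 1 \<le> i \<Longrightarrow> i < d \<Longrightarrow> m (Suc i) choose i \<le> N i"
    and upper: "\<And>i. 1 \<le> i \<Longrightarrow> i \<le> d \<Longrightarrow> N i \<le> m i choose i"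
  obtains F where "\<And>i. 1 \<le> i \<Longrightarrow> i \<le> d \<Longrightarrow> F i \<subseteq> subsets_of_card (m i) i"
    and "\<And>i. 1 \<le> i \<Longrightarrow> i < d \<Longrightarrow> subsets_of_card (m (Suc i)) i \<subseteq> F i"
    and "\<And>i. 1 \<le> i \<Longrightarrow> i \<le> d \<Longrightarrow> card (F i) = N i"
proof -
  have "\<forall>i\<in>{1..d}. \<exists>S. (i < d \<longrightarrow> subsets_of_card (m (Suc i)) i \<subseteq> S) \<and>
      S \<subseteq> subsets_of_card (m i) i \<and> card S = N i"
  proof
    fix i assume i: "i \<in> {1..d}"
    define A where "A = (if i < d then subsets_of_card (m (Suc i)) i else {})"
    have "A \<subseteq> subsets_of_card (m i) i"
    proof (cases "i < d")
      case True
      then have "m (Suc i) \<le> m i" using i by (simp add: antitone)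
      then show ?thesis using True by (simp add: A_def subsets_of_card_mono[of "m (Suc i)" "m i"])
    qed (simp add: A_def)
    moreover have "card A \<le> N i"
      using i lower[of i] by (simp add: A_def card_subsets_of_card)
    moreover have "N i \<le> card (subsets_of_card (m i) i)"
      using i upper[of i] by (simp add: card_subsets_of_card)
    ultimately obtain S where "A \<subseteq> S" "S \<subseteq> subsets_of_card (m i) i" "card S = N i"
      by (rule card_subset_between[OF finite_subsets_of_card])
    then show "\<exists>S. (i < d \<longrightarrow> subsets_of_card (m (Suc i)) i \<subseteq> S) \<and>
        S \<subseteq> subsets_of_card (m i) i \<and> card S = N i"
      by (intro exI[of _ S]) (simp add: A_def split: if_splits)
  qed
  then obtain F where "\<forall>i\<in>{1..d}. (i < d \<longrightarrow> subsets_of_card (m (Suc i)) i \<subseteq> F i) \<and>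
      F i \<subseteq> subsets_of_card (m i) i \<and> card (F i) = N i"
    by (metis bchoice)
  then show thesis by (intro that[of F]) simp_all
qed

lemma is_f_polynomial_if_choose_bounds:
  fixes m N :: "nat \<Rightarrow> nat"
  assumes antitone: "\<And>i j. 1 \<le> j \<Longrightarrow> j \<le> i \<Longrightarrow> i \<le> d \<Longrightarrow> m i \<le> m j"
    and lower: "\<And>i. 1 \<le> i \<Longrightarrow> i < d \<Longrightarrow> m (Suc i) choose i \<le> N i"
    and upper: "\<And>i. 1 \<le> i \<Longrightarrow> i \<le> d \<Longrightarrow> N i \<le> m i choose i"
  shows "is_f_polynomial (1 + (\<Sum>i=1..d. monom (real (N i)) i))"
proof -
  obtain F where level_upper: "\<And>i. 1 \<le> i \<Longrightarrow> i \<le> d \<Longrightarrow> F i \<subseteq> subsets_of_card (m i) i"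
    and level_lower: "\<And>i. 1 \<le> i \<Longrightarrow> i < d \<Longrightarrow> subsets_of_card (m (Suc i)) i \<subseteq> F i"
    and level_card: "\<And>i. 1 \<le> i \<Longrightarrow> i \<le> d \<Longrightarrow> card (F i) = N i"
    using obtain_face_levels[OF assms] by blast
  define \<Delta> where "\<Delta> = insert {} (\<Union>i\<in>{1..d}. F i)"
  have complex: "simplicial_complex {0..<m 1} \<Delta>"
    unfolding \<Delta>_def using antitone level_upper level_lower by (rule simplicial_complex_of_levels)
  have faces: "num_faces \<Delta> k = (if k = 0 then 1 else if k \<le> d then N k else 0)" for k
    using num_faces_of_levels[of d F m k, OF level_upper] level_card by (simp add: \<Delta>_def)
  have "f_polynomial {0..<m 1} \<Delta> = (\<Sum>i\<le>max (m 1) d. monom (real (num_faces \<Delta> i)) i)"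
    using complex by (rule f_polynomial_eq_sum_atMost) simp
  also have "\<dots> = 1 + (\<Sum>i=1..d. monom (real (N i)) i)"
    by (rule poly_eqI) (simp add: coeff_sum coeff_monom coeff_1 faces le_max_iff_disj)
  finally show ?thesis
    using complex unfolding is_f_polynomial_def by blast
qed

lemma gbinomial_mono_above_pred:
  fixes a b :: real
  assumes "real k - 1 \<le> a" "a \<le> b"
  shows "a gchoose k \<le> b gchoose k"
proof -
  have "(\<Prod>i = 0..<k. a - of_nat i) \<le> (\<Prod>i = 0..<k. b - of_nat i)"
    by (rule prod_mono) (use assms in auto)
  then show ?thesis
    by (simp add: gbinomial_prod_rev divide_right_mono)
qed

lemma gbinomial_le_choose:
  assumes "real k - 1 \<le> y" "y \<le> real n"
  shows "y gchoose k \<le> real (n choose k)"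
  using gbinomial_mono_above_pred[OF assms] by (simp add: binomial_gbinomial)

lemma choose_le_gbinomial:
  assumes "real k - 1 \<le> real n" "real n \<le> y"
  shows "real (n choose k) \<le> y gchoose k"
  using gbinomial_mono_above_pred[OF assms] by (simp add: binomial_gbinomial)

theorem theorem3p3:
  fixes d :: nat and x :: "nat \<Rightarrow> real"
  assumes x_ge: "\<And>i. 1 \<le> i \<Longrightarrow> i \<le> d \<Longrightarrow> x i \<ge> real i - 1"
    and pos_int: "\<And>i. 1 \<le> i \<Longrightarrow> i \<le> d \<Longrightarrow> (x i gchoose i) \<in> \<nat> \<and> (x i gchoose i) > 0"
    and real_rooted: "\<And>z::complex.
        poly (map_poly complex_of_real (1 + (\<Sum>i=1..d. monom (x i gchoose i) i))) z = 0 \<Longrightarrow> z \<in> \<real>"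
    and cond: "\<And>i. 2 \<le> i \<Longrightarrow> i \<le> d \<Longrightarrow> x (i - 1) \<ge> of_int \<lceil>x i\<rceil>"
  shows "is_f_polynomial (1 + (\<Sum>i=1..d. monom (x i gchoose i) i))"
proof -
  define m where "m i = nat \<lceil>x i\<rceil>" for i
  define N where "N i = nat \<lfloor>x i gchoose i\<rfloor>" for i
  have N: "x i gchoose i = real (N i)" if "1 \<le> i" "i \<le> d" for i
    using pos_int[OF that] by (auto simp: N_def elim!: Nats_cases)
  have x_le_m: "x i \<le> real (m i)" if "1 \<le> i" "i \<le> d" for i
    using x_ge[OF that] that by (simp add: m_def)
  have m_le_x: "real (m (Suc i)) \<le> x i" if "1 \<le> i" "Suc i \<le> d" for i
    using cond[of "Suc i"] x_ge[of "Suc i"] that by (simp add: m_def)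
  have antitone: "m i \<le> m j" if "1 \<le> j" "j \<le> i" "i \<le> d" for i j
  proof (rule lift_Suc_antimono_le_interval[OF _ that])
    show "m (Suc n) \<le> m n" if "1 \<le> n" "Suc n \<le> d" for n
      using m_le_x[OF that] x_le_m[of n] that by simp
  qed
  have lower: "m (Suc i) choose i \<le> N i" if "1 \<le> i" "i < d" for i
    using choose_le_gbinomial[of i "m (Suc i)" "x i"] x_le_m[of "Suc i"] x_ge[of "Suc i"]
      m_le_x[of i] N[of i] that by simp
  have upper: "N i \<le> m i choose i" if "1 \<le> i" "i \<le> d" for i
    using gbinomial_le_choose[of i "x i" "m i"] x_ge[OF that] x_le_m[OF that] N[OF that] by simp
  have "(\<Sum>i=1..d. monom (x i gchoose i) i) = (\<Sum>i=1..d. monom (real (N i)) i)"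
    using N by (intro sum.cong) auto
  then show ?thesis
    using is_f_polynomial_if_choose_bounds[OF antitone lower upper] by simp
qed

end
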